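(* Let $\alpha\in[0,1]$, $\kappa_{rg}\in[0,1)$, $\kappa_{rs}>0$. Suppose that at iteration $k$ a step $s_k\neq 0$, a symmetric matrix $M_k$ and a residual $r_k$ satisfy $(H_k+M_k)s_k=-g_k+r_k$ with $\|r_k\|\le\min[\kappa_{rg}\|g_k\|,\kappa_{rs}\|M_ks_k\|]$, $M_k\succeq0$ and $H_k+M_k\succeq 0$, and moreover $$\lambda_{\min}(M_k)\le\bar\kappa_\lambda\|s_k\|^\alpha$$ for some constant $\bar\kappa_\lambda>1$. Then $$\lambda_{\min}(H_k)+\lambda_{\min}(M_k)\le\kappa_\lambda\max\{|\lambda_{\min}(H_k)|,\|g_k\|^{\alpha/(1+\alpha)}\}\quad\text{with }\kappa_\lambda=2\bar\kappa_\lambda^{1/(1+\alpha)}(1+\kappa_{rg}).$$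
   Context: $f:\mathbb{R}^n\to\mathbb{R}$ is twice continuously differentiable, $g_k=\nabla f(x_k)$, $H_k=\nabla^2 f(x_k)$. $\|\cdot\|$ is the Euclidean norm, $\lambda_{\min}$ the leftmost eigenvalue of a symmetric matrix, $M\succeq0$ means positive semidefinite. *)

theory Defs
  imports "HOL-Analysis.Analysis"
begin

definition sym_mat :: "real^'n^'n \<Rightarrow> bool" where
  "sym_mat A \<longleftrightarrow> transpose A = A"

definition psd :: "real^'n^'n \<Rightarrow> bool" where
  "psd A \<longleftrightarrow> sym_mat A \<and> (\<forall>x. 0 \<le> x \<bullet> (A *v x))"

definition lambda_min :: "real^'n^'n \<Rightarrow> real" where
  "lambda_min A = Inf {l. \<exists>v. v \<noteq> 0 \<and> A *v v = l *\<^sub>R v}"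

end

theory Submission imports Defs begin

text \<open>The eigenvalue bounds enter only through the Rayleigh inequality
  \<open>lambda_min A * \<parallel>s\<parallel>\<^sup>2 \<le> s \<bullet> (A s)\<close>. Applied to \<open>H\<close> and \<open>M\<close>, together with the step equation
  and the residual bound, it gives \<open>t * \<parallel>s\<parallel> \<le> (1 + \<kappa>rg) * \<parallel>g\<parallel>\<close> for
  \<open>t = lambda_min H + lambda_min M\<close>. If \<open>t \<le> 2 \<bar>lambda_min H\<bar>\<close> the claim is immediate;
  otherwise \<open>t/2 < lambda_min M \<le> \<kappa>lbar * \<parallel>s\<parallel> powr \<alpha>\<close>, and eliminating \<open>\<parallel>s\<parallel>\<close> gives
  \<open>t powr (1 + \<alpha>) \<le> 2 \<kappa>lbar ((1 + \<kappa>rg) \<parallel>g\<parallel>) powr \<alpha>\<close>.\<close>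

lemma sym_mat_inner_commute:
  assumes "sym_mat A" shows "x \<bullet> (A *v y) = (A *v x) \<bullet> y"
proof -
  have "A *v x = x v* A" using assms unfolding sym_mat_def
    by (metis vector_transpose_matrix)
  then show ?thesis by (simp add: dot_lmul_matrix)
qed

lemma psd_quadratic_form_zero_imp_kernel:
  fixes B :: "real^'n^'n"
  assumes "psd B" and "u \<bullet> (B *v u) = 0"
  shows "B *v u = 0"
proof -
  define w where "w = B *v u"
  have form_nonneg: "0 \<le> y \<bullet> (B *v y)" for y using assms(1) by (simp add: psd_def)
  have sym: "sym_mat B" using assms(1) by (simp add: psd_def)
  have expand: "(u + t *\<^sub>R w) \<bullet> (B *v (u + t *\<^sub>R w)) = t * (2 * (w \<bullet> w) + t * (w \<bullet> (B *v w)))"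
    for t
    using assms(2) sym_mat_inner_commute[OF sym, of u w]
    by (simp add: w_def algebra_simps inner_add_left inner_add_right inner_commute
        matrix_vector_right_distrib matrix_vector_mult_scaleR)
  have "w \<bullet> w = 0"
  proof (rule ccontr)
    assume "w \<bullet> w \<noteq> 0"
    then have w_pos: "w \<bullet> w > 0" by (simp add: order_less_le)
    have c_pos: "w \<bullet> (B *v w) + 1 > 0" using form_nonneg[of w] by simp
    define t where "t = - (w \<bullet> w) / (w \<bullet> (B *v w) + 1)"
    have "t < 0" using w_pos c_pos by (simp add: t_def)
    moreover have "- t * (w \<bullet> (B *v w)) < w \<bullet> w"
      using w_pos c_pos form_nonneg[of w] by (simp add: t_def field_simps)
    then have "0 < 2 * (w \<bullet> w) + t * (w \<bullet> (B *v w))"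
      using w_pos by linarith
    ultimately have "t * (2 * (w \<bullet> w) + t * (w \<bullet> (B *v w))) < 0"
      by (simp add: mult_less_0_iff)
    then show False using form_nonneg[of "u + t *\<^sub>R w"] expand by simp
  qed
  then show ?thesis by (simp add: w_def)
qed

text \<open>The minimum \<open>\<mu>\<close> of the Rayleigh quotient over the unit sphere is attained at some \<open>u\<close>;
  then \<open>A - \<mu> I\<close> is positive semidefinite with \<open>u\<close> in the null set of its form, so \<open>u\<close> is an
  eigenvector for \<open>\<mu>\<close>.\<close>
lemma sym_mat_rayleigh_min_eigenpair:
  fixes A :: "real^'n^'n"
  assumes "sym_mat A"
  obtains \<mu> u where "u \<noteq> 0" "A *v u = \<mu> *\<^sub>R u" "\<And>y. \<mu> * (y \<bullet> y) \<le> y \<bullet> (A *v y)"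
proof -
  define q where "q y = y \<bullet> (A *v y)" for y :: "real^'n"
  have "continuous_on (sphere 0 1) q" unfolding q_def
    by (intro continuous_intros linear_continuous_on bounded_linear_inner_right
        matrix_vector_mul_bounded_linear)
  moreover have "sphere (0::real^'n) 1 \<noteq> {}" by simp
  ultimately obtain u where u: "u \<in> sphere 0 1" and u_min: "\<And>y. y \<in> sphere 0 1 \<Longrightarrow> q u \<le> q y"
    using continuous_attains_inf[OF compact_sphere] by blast
  define \<mu> where "\<mu> = q u"
  have rayleigh: "\<mu> * (y \<bullet> y) \<le> q y" for y
  proof (cases "y = 0")
    case True then show ?thesis by (simp add: q_def)
  next
    case False
    then have "inverse (norm y) *\<^sub>R y \<in> sphere 0 1" by simp
    then have "\<mu> \<le> q (inverse (norm y) *\<^sub>R y)" using u_min \<mu>_def by blast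
    also have "\<dots> = q y / (norm y)\<^sup>2"
      by (simp add: q_def matrix_vector_mult_scaleR power2_eq_square divide_inverse_commute)
    finally show ?thesis using False by (simp add: field_simps power2_norm_eq_inner)
  qed
  define B where "B = A - \<mu> *\<^sub>R mat 1"
  have B_mult: "B *v y = A *v y - \<mu> *\<^sub>R y" for y
    by (simp add: B_def matrix_vector_mult_diff_rdistrib scaleR_matrix_vector_assoc[symmetric])
  have "sym_mat B"
    using assms by (simp add: sym_mat_def B_def transpose_def mat_def vec_eq_iff)
  moreover have "0 \<le> y \<bullet> (B *v y)" for y
    using rayleigh[of y] by (simp add: B_mult q_def inner_diff_right)
  ultimately have "psd B" by (simp add: psd_def)
  moreover have "u \<bullet> (B *v u) = 0"
    using u by (simp add: B_mult q_def \<mu>_def inner_diff_right inner_commute dot_square_norm)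
  ultimately have "A *v u = \<mu> *\<^sub>R u"
    using psd_quadratic_form_zero_imp_kernel B_mult by (metis eq_iff_diff_eq_0)
  moreover have "u \<noteq> 0" using u by auto
  ultimately show ?thesis using that rayleigh unfolding q_def by blast
qed

lemma lambda_min_le_rayleigh:
  fixes A :: "real^'n^'n"
  assumes "sym_mat A"
  shows "lambda_min A * (x \<bullet> x) \<le> x \<bullet> (A *v x)"
proof -
  obtain \<mu> u where u: "u \<noteq> 0" "A *v u = \<mu> *\<^sub>R u"
    and rayleigh: "\<And>y. \<mu> * (y \<bullet> y) \<le> y \<bullet> (A *v y)"
    using sym_mat_rayleigh_min_eigenpair[OF assms] by blast
  let ?spec = "{l. \<exists>v. v \<noteq> 0 \<and> A *v v = l *\<^sub>R v}"
  have "\<mu> \<le> l" if "l \<in> ?spec" for l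
  proof -
    from that obtain v where v: "v \<noteq> 0" "A *v v = l *\<^sub>R v" by blast
    then have "\<mu> * (v \<bullet> v) \<le> l * (v \<bullet> v)" using rayleigh[of v] by simp
    then show ?thesis using v(1) by simp
  qed
  then have "lambda_min A \<le> \<mu>"
    unfolding lambda_min_def using u by (intro cInf_lower bdd_belowI) blast+
  then have "lambda_min A * (x \<bullet> x) \<le> \<mu> * (x \<bullet> x)" by (simp add: mult_right_mono)
  also have "\<dots> \<le> x \<bullet> (A *v x)" by (rule rayleigh)
  finally show ?thesis .
qed

lemma lambda_min_add_mult_norm_le:
  fixes A B :: "real^'n^'n"
  assumes "sym_mat A" "sym_mat B"
  shows "(lambda_min A + lambda_min B) * norm s \<le> norm ((A + B) *v s)"
proof (cases "s = 0")
  case False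
  have "(lambda_min A + lambda_min B) * norm s * norm s \<le> s \<bullet> (A *v s) + s \<bullet> (B *v s)"
    using lambda_min_le_rayleigh[OF assms(1), of s] lambda_min_le_rayleigh[OF assms(2), of s]
    by (simp add: algebra_simps dot_square_norm power2_eq_square)
  also have "\<dots> = s \<bullet> ((A + B) *v s)"
    by (simp add: matrix_vector_mult_add_rdistrib inner_add_right)
  also have "\<dots> \<le> norm ((A + B) *v s) * norm s"
    using norm_cauchy_schwarz by (simp add: mult.commute)
  finally show ?thesis using False by simp
qed simp

lemma powr_one_plus_le_of_step_bounds:
  fixes t ns C K \<alpha> :: real
  assumes "0 \<le> \<alpha>" "0 < t" "0 < ns" "t * ns \<le> C" "t \<le> K * ns powr \<alpha>" "0 \<le> K"
  shows "t powr (1 + \<alpha>) \<le> K * C powr \<alpha>"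
proof -
  have "0 < t * ns" using assms(2,3) by simp
  then have "0 < C" using assms(4) by linarith
  have "ns \<le> C / t" using assms(2,4) by (simp add: field_simps)
  then have "ns powr \<alpha> \<le> C powr \<alpha> / t powr \<alpha>"
    using assms(1-3) \<open>0 < C\<close> by (simp add: powr_mono2 powr_divide[symmetric])
  then have "t \<le> K * (C powr \<alpha> / t powr \<alpha>)"
    using assms(5,6) by (meson mult_left_mono order_trans)
  then have "t * t powr \<alpha> \<le> K * C powr \<alpha>" using assms(2) by (simp add: field_simps)
  then show ?thesis using assms(2) by (simp add: powr_add)
qed

lemma eigen_sum_le_of_step_bounds:
  fixes lH lM ns G K c \<alpha> :: real
  assumes "0 \<le> \<alpha>" "1 \<le> K" "1 \<le> c" "0 < ns"
    and step: "(lH + lM) * ns \<le> c * G" and lM_le: "lM \<le> K * ns powr \<alpha>"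
  shows "lH + lM \<le> (2 * K powr (1 / (1 + \<alpha>)) * c) * max \<bar>lH\<bar> (G powr (\<alpha> / (1 + \<alpha>)))"
proof -
  define t where "t = lH + lM"
  define p where "p = 1 / (1 + \<alpha>)"
  have p: "0 < p" "p \<le> 1" using assms(1) by (auto simp: p_def field_simps)
  have "1 * 1 \<le> K powr p * c"
    using assms(2,3) p(1) by (intro mult_mono) (auto simp: ge_one_powr_ge_zero)
  then have factor_ge_2: "2 \<le> 2 * K powr p * c" by simp
  then have factor_nonneg: "0 \<le> 2 * K powr p * c" by linarith
  consider "t \<le> 2 * \<bar>lH\<bar>" | "2 * \<bar>lH\<bar> < t" by linarith
  then have "t \<le> (2 * K powr p * c) * max \<bar>lH\<bar> (G powr (\<alpha> * p))"
  proof cases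
    case 1
    have "2 * \<bar>lH\<bar> \<le> (2 * K powr p * c) * \<bar>lH\<bar>"
      using factor_ge_2 by (intro mult_right_mono) auto
    also have "\<dots> \<le> (2 * K powr p * c) * max \<bar>lH\<bar> (G powr (\<alpha> * p))"
      using factor_nonneg by (intro mult_left_mono) auto
    finally show ?thesis using 1 by linarith
  next
    case 2
    then have t_pos: "0 < t" and "t \<le> 2 * K * ns powr \<alpha>"
      using lM_le by (auto simp: t_def)
    with assms(1,2,4) step have t_powr: "t powr (1 + \<alpha>) \<le> 2 * K * (c * G) powr \<alpha>"
      by (intro powr_one_plus_le_of_step_bounds[where ns = ns]) (auto simp: t_def)
    have "0 < t * ns" using t_pos assms(4) by simp
    then have "0 < c * G" using step by (simp add: t_def)
    then have G_pos: "0 < G" using assms(3) by (simp add: zero_less_mult_iff)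
    have "t = (t powr (1 + \<alpha>)) powr p" using t_pos assms(1) by (simp add: powr_powr p_def)
    also have "\<dots> \<le> (2 * K * (c * G) powr \<alpha>) powr p" using t_powr t_pos p by (intro powr_mono2) auto
    also have "\<dots> = 2 powr p * K powr p * c powr (\<alpha> * p) * G powr (\<alpha> * p)"
      using assms(2,3) G_pos by (simp add: powr_mult powr_powr)
    also have "\<dots> \<le> 2 * K powr p * c * G powr (\<alpha> * p)"
    proof -
      have "2 powr p \<le> 2" using p powr_mono[of p 1 2] by simp
      moreover have "c powr (\<alpha> * p) \<le> c"
        using assms(1,3) p powr_mono[of "\<alpha> * p" 1 c] by (simp add: p_def)
      ultimately show ?thesis by (simp add: mult_mono mult_right_mono)
    qed
    also have "\<dots> \<le> (2 * K powr p * c) * max \<bar>lH\<bar> (G powr (\<alpha> * p))"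
      using factor_nonneg by (intro mult_left_mono) auto
    finally show ?thesis .
  qed
  then show ?thesis by (simp add: t_def p_def)
qed

theorem lemma2p2:
  fixes H M :: "real^'n^'n" and g s r :: "real^'n"
    and \<alpha> \<kappa>rg \<kappa>rs \<kappa>lbar :: real
  assumes "0 \<le> \<alpha>" "\<alpha> \<le> 1"
    and "0 \<le> \<kappa>rg" "\<kappa>rg < 1" "0 < \<kappa>rs"
    and "sym_mat H"
    and "s \<noteq> 0" "sym_mat M"
    and "(H + M) *v s = - g + r"
    and "norm r \<le> min (\<kappa>rg * norm g) (\<kappa>rs * norm (M *v s))"
    and "psd M" "psd (H + M)"
    and "\<kappa>lbar > 1"
    and "lambda_min M \<le> \<kappa>lbar * norm s powr \<alpha>"
  shows "lambda_min H + lambda_min M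
     \<le> (2 * \<kappa>lbar powr (1 / (1 + \<alpha>)) * (1 + \<kappa>rg))
        * max \<bar>lambda_min H\<bar> (norm g powr (\<alpha> / (1 + \<alpha>)))"
proof -
  have "(lambda_min H + lambda_min M) * norm s \<le> norm ((H + M) *v s)"
    using assms(6,8) by (rule lambda_min_add_mult_norm_le)
  also have "\<dots> \<le> norm g + norm r"
    using assms(9) norm_triangle_ineq[of "- g" r] by simp
  also have "\<dots> \<le> (1 + \<kappa>rg) * norm g"
    using assms(10) by (simp add: algebra_simps)
  finally show ?thesis
    using assms(1,3,7,13,14) by (intro eigen_sum_le_of_step_bounds) auto
qed

end
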